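(* Under the standing assumptions below, let $(x^\star,\lambda^\star,s^\star)$ be an optimal primal-dual solution, let $\epsilon>0$, and let $\zeta>0$ satisfy $\|(x^\star,s^\star)\|\le\zeta$ and $\zeta^2\le\chi/\epsilon^\kappa$ for some constants $\chi,\kappa>0$. Run Algorithm IIPM from $(x^0,\lambda^0,s^0)=(\zeta e,0,\zeta e)$. Then there is an index $K=O(n^2|\log\epsilon|)$ such that the iterates satisfy $\mu^k\le\epsilon$ for all $k\ge K$.
   Context: Standing assumptions: $Q\in\mathbb{S}^{n+1}$ (real symmetric), $q\in\mathbb{R}^{n+1}$, $A\in\mathbb{R}^{m\times(n+1)}$ has full row rank $m$, and $x^TQx>0$ for every nonzero $x$ with $Ax=0$; the problem is $\min\{\tfrac12x^TQx+q^Tx : Ax=0,\ x\ge0\}$. An optimal primal-dual solution is $(x^\star,\lambda^\star,s^\star)$ with $Qx^\star+q+A^T\lambda^\star-s^\star=0$, $Ax^\star=0$, $x^\star,s^\star\ge0$, $(x^\star)^Ts^\star=0$. $e\in\mathbb{R}^{n+1}$ is the all-ones vector, $X=\mathrm{Diag}(x)$, $S=\mathrm{Diag}(s)$. Residuals: $r_d(x,\lambda,s)=Qx+q+A^T\lambda-s$, $r_p(x,\lambda,s)=Ax$, $r_c(x,\lambda,s)=Xs$, and $\mu(x,s)=x^Ts/(n+1)$; write $r_d^k,r_p^k,r_c^k,\mu^k$ for their values at the $k$-th iterate. Neighborhood, for parameters $\gamma\in(0,1)$, $\beta\ge1$: $\mathcal N_{-\infty}(\gamma,\beta)=\{(x,\lambda,s):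 \|(r_d,r_p)\|/\mu\le\beta\|(r_d^0,r_p^0)\|/\mu^0,\ (x,s)>0,\ Xs\ge\gamma\mu(x,s)e\}$. Algorithm IIPM (parameters $\beta\ge1$, $\gamma\in(0,1)$, $0<\sigma^{\min}<\sigma^{\max}\le\tfrac12$): starting from $(x^0,s^0)>0$, at iteration $k$ choose $\sigma^k\in[\sigma^{\min},\sigma^{\max}]$, compute $(\Delta x^k,\Delta\lambda^k,\Delta s^k)$ solving $Q\Delta x+A^T\Delta\lambda-\Delta s=-r_d^k$, $A\Delta x=-r_p^k$, $S^k\Delta x+X^k\Delta s=-r_c^k+\sigma^k\mu^ke$; then choose $\alpha^k$ as the largest $\alpha\in(0,1]$ such that $(x^k,\lambda^k,s^k)+\alpha(\Delta x^k,\Delta\lambda^k,\Delta s^k)\in\mathcal N_{-\infty}(\gamma,\beta)$ and $\mu(x^k+\alpha\Delta x^k,s^k+\alpha\Delta s^k)\le(1-0.01\alpha)\mu^k$; set the next iterate to $(x^k,\lambda^k,s^k)+\alpha^k(\Delta x^k,\Delta\lambda^k,\Delta s^k)$. The constant in $O(\cdot)$ depends on $\chi,\kappa,\beta,\gamma,\sigma^{\min},\sigma^{\max}$ but not on $n$ or $\epsilon$. *)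

theory Defs
  imports Complex_Main
begin

text \<open>Explicit-dimension encoding: the problem dimension is n+1, vectors in R^(n+1)
  are functions nat => real read on indices {..n}; vectors in R^m are read on {..<m};
  matrices are nat => nat => real (Q on {..n}x{..n}, A on {..<m}x{..n}).\<close>

definition quad :: "nat \<Rightarrow> (nat \<Rightarrow> nat \<Rightarrow> real) \<Rightarrow> (nat \<Rightarrow> real) \<Rightarrow> real" where
  "quad n Q x = (\<Sum>i\<le>n. \<Sum>j\<le>n. x i * Q i j * x j)"

definition Amul :: "nat \<Rightarrow> (nat \<Rightarrow> nat \<Rightarrow> real) \<Rightarrow> (nat \<Rightarrow> real) \<Rightarrow> nat \<Rightarrow> real" where
  "Amul n A x = (\<lambda>k. \<Sum>j\<le>n. A k j * x j)"

definition standing_assms ::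
  "nat \<Rightarrow> nat \<Rightarrow> (nat \<Rightarrow> nat \<Rightarrow> real) \<Rightarrow> (nat \<Rightarrow> nat \<Rightarrow> real) \<Rightarrow> bool" where
  "standing_assms n m Q A \<longleftrightarrow>
     (\<forall>i\<le>n. \<forall>j\<le>n. Q i j = Q j i) \<and>
     \<comment> \<open>A has full row rank m: its m rows are linearly independent\<close>
     (\<forall>y::nat \<Rightarrow> real. (\<forall>j\<le>n. (\<Sum>k<m. y k * A k j) = 0) \<longrightarrow> (\<forall>k<m. y k = 0)) \<and>
     (\<forall>x. (\<forall>k<m. Amul n A x k = 0) \<and> (\<exists>j\<le>n. x j \<noteq> 0) \<longrightarrow> quad n Q x > 0)"

definition rd :: "nat \<Rightarrow> nat \<Rightarrow> (nat \<Rightarrow> nat \<Rightarrow> real) \<Rightarrow> (nat \<Rightarrow> real) \<Rightarrow> (nat \<Rightarrow> nat \<Rightarrow> real)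
    \<Rightarrow> (nat \<Rightarrow> real) \<Rightarrow> (nat \<Rightarrow> real) \<Rightarrow> (nat \<Rightarrow> real) \<Rightarrow> nat \<Rightarrow> real" where
  "rd n m Q q A x l s = (\<lambda>i. (\<Sum>j\<le>n. Q i j * x j) + q i + (\<Sum>k<m. A k i * l k) - s i)"

definition rp :: "nat \<Rightarrow> (nat \<Rightarrow> nat \<Rightarrow> real) \<Rightarrow> (nat \<Rightarrow> real) \<Rightarrow> nat \<Rightarrow> real" where
  "rp n A x = Amul n A x"

definition mu :: "nat \<Rightarrow> (nat \<Rightarrow> real) \<Rightarrow> (nat \<Rightarrow> real) \<Rightarrow> real" where
  "mu n x s = (\<Sum>i\<le>n. x i * s i) / real (n + 1)"

definition res_norm :: "nat \<Rightarrow> nat \<Rightarrow> (nat \<Rightarrow> nat \<Rightarrow> real) \<Rightarrow> (nat \<Rightarrow> real) \<Rightarrow> (nat \<Rightarrow> nat \<Rightarrow> real)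
    \<Rightarrow> (nat \<Rightarrow> real) \<Rightarrow> (nat \<Rightarrow> real) \<Rightarrow> (nat \<Rightarrow> real) \<Rightarrow> real" where
  "res_norm n m Q q A x l s =
     sqrt ((\<Sum>i\<le>n. (rd n m Q q A x l s i)\<^sup>2) + (\<Sum>k<m. (rp n A x k)\<^sup>2))"

definition optimal_pd :: "nat \<Rightarrow> nat \<Rightarrow> (nat \<Rightarrow> nat \<Rightarrow> real) \<Rightarrow> (nat \<Rightarrow> real) \<Rightarrow> (nat \<Rightarrow> nat \<Rightarrow> real)
    \<Rightarrow> (nat \<Rightarrow> real) \<Rightarrow> (nat \<Rightarrow> real) \<Rightarrow> (nat \<Rightarrow> real) \<Rightarrow> bool" where
  "optimal_pd n m Q q A x l s \<longleftrightarrow>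
     (\<forall>i\<le>n. rd n m Q q A x l s i = 0) \<and> (\<forall>k<m. rp n A x k = 0) \<and>
     (\<forall>i\<le>n. x i \<ge> 0 \<and> s i \<ge> 0) \<and> (\<Sum>i\<le>n. x i * s i) = 0"

definition in_nbhd :: "nat \<Rightarrow> nat \<Rightarrow> (nat \<Rightarrow> nat \<Rightarrow> real) \<Rightarrow> (nat \<Rightarrow> real) \<Rightarrow> (nat \<Rightarrow> nat \<Rightarrow> real)
    \<Rightarrow> real \<Rightarrow> real \<Rightarrow> (nat \<Rightarrow> real) \<Rightarrow> (nat \<Rightarrow> real) \<Rightarrow> (nat \<Rightarrow> real)
    \<Rightarrow> (nat \<Rightarrow> real) \<Rightarrow> (nat \<Rightarrow> real) \<Rightarrow> (nat \<Rightarrow> real) \<Rightarrow> bool" where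
  "in_nbhd n m Q q A \<gamma> \<beta> x0 l0 s0 x l s \<longleftrightarrow>
     res_norm n m Q q A x l s / mu n x s
        \<le> \<beta> * res_norm n m Q q A x0 l0 s0 / mu n x0 s0 \<and>
     (\<forall>i\<le>n. x i > 0 \<and> s i > 0) \<and>
     (\<forall>i\<le>n. x i * s i \<ge> \<gamma> * mu n x s)"

definition step_ok :: "nat \<Rightarrow> nat \<Rightarrow> (nat \<Rightarrow> nat \<Rightarrow> real) \<Rightarrow> (nat \<Rightarrow> real) \<Rightarrow> (nat \<Rightarrow> nat \<Rightarrow> real)
    \<Rightarrow> real \<Rightarrow> real \<Rightarrow> (nat \<Rightarrow> real) \<Rightarrow> (nat \<Rightarrow> real) \<Rightarrow> (nat \<Rightarrow> real)
    \<Rightarrow> (nat \<Rightarrow> real) \<Rightarrow> (nat \<Rightarrow> real) \<Rightarrow> (nat \<Rightarrow> real)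
    \<Rightarrow> (nat \<Rightarrow> real) \<Rightarrow> (nat \<Rightarrow> real) \<Rightarrow> (nat \<Rightarrow> real) \<Rightarrow> real \<Rightarrow> bool" where
  "step_ok n m Q q A \<gamma> \<beta> x0 l0 s0 x l s dx dl ds \<alpha> \<longleftrightarrow>
     0 < \<alpha> \<and> \<alpha> \<le> 1 \<and>
     in_nbhd n m Q q A \<gamma> \<beta> x0 l0 s0
       (\<lambda>i. x i + \<alpha> * dx i) (\<lambda>k. l k + \<alpha> * dl k) (\<lambda>i. s i + \<alpha> * ds i) \<and>
     mu n (\<lambda>i. x i + \<alpha> * dx i) (\<lambda>i. s i + \<alpha> * ds i) \<le> (1 - 0.01 * \<alpha>) * mu n x s"

definition newton_dir :: "nat \<Rightarrow> nat \<Rightarrow> (nat \<Rightarrow> nat \<Rightarrow> real) \<Rightarrow> (nat \<Rightarrow> real) \<Rightarrow> (nat \<Rightarrow> nat \<Rightarrow> real)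
    \<Rightarrow> real \<Rightarrow> (nat \<Rightarrow> real) \<Rightarrow> (nat \<Rightarrow> real) \<Rightarrow> (nat \<Rightarrow> real)
    \<Rightarrow> (nat \<Rightarrow> real) \<Rightarrow> (nat \<Rightarrow> real) \<Rightarrow> (nat \<Rightarrow> real) \<Rightarrow> bool" where
  "newton_dir n m Q q A \<sigma> x l s dx dl ds \<longleftrightarrow>
     (\<forall>i\<le>n. (\<Sum>j\<le>n. Q i j * dx j) + (\<Sum>k<m. A k i * dl k) - ds i = - rd n m Q q A x l s i) \<and>
     (\<forall>k<m. Amul n A dx k = - rp n A x k) \<and>
     (\<forall>i\<le>n. s i * dx i + x i * ds i = - (x i * s i) + \<sigma> * mu n x s)"

definition iipm_run :: "nat \<Rightarrow> nat \<Rightarrow> (nat \<Rightarrow> nat \<Rightarrow> real) \<Rightarrow> (nat \<Rightarrow> real) \<Rightarrow> (nat \<Rightarrow> nat \<Rightarrow> real)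
    \<Rightarrow> real \<Rightarrow> real \<Rightarrow> real \<Rightarrow> real
    \<Rightarrow> (nat \<Rightarrow> nat \<Rightarrow> real) \<Rightarrow> (nat \<Rightarrow> nat \<Rightarrow> real) \<Rightarrow> (nat \<Rightarrow> nat \<Rightarrow> real) \<Rightarrow> bool" where
  "iipm_run n m Q q A \<beta> \<gamma> \<sigma>min \<sigma>max x l s \<longleftrightarrow>
     (\<exists>\<sigma> dx dl ds \<alpha>. \<forall>k.
        \<sigma>min \<le> \<sigma> k \<and> \<sigma> k \<le> \<sigma>max \<and>
        newton_dir n m Q q A (\<sigma> k) (x k) (l k) (s k) (dx k) (dl k) (ds k) \<and>
        step_ok n m Q q A \<gamma> \<beta> (x 0) (l 0) (s 0) (x k) (l k) (s k) (dx k) (dl k) (ds k) (\<alpha> k) \<and>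
        (\<forall>a. step_ok n m Q q A \<gamma> \<beta> (x 0) (l 0) (s 0) (x k) (l k) (s k) (dx k) (dl k) (ds k) a
               \<longrightarrow> a \<le> \<alpha> k) \<and>
        x (Suc k) = (\<lambda>i. x k i + \<alpha> k * dx k i) \<and>
        l (Suc k) = (\<lambda>j. l k j + \<alpha> k * dl k j) \<and>
        s (Suc k) = (\<lambda>i. s k i + \<alpha> k * ds k i))"

end

theory Submission
  imports Defs
begin

text \<open>Every step multiplies both residuals by exactly 1 - \<alpha>, so the k-th residual is
  \<nu>_k (r_d^0, r_p^0) with \<nu>_k = \<Prod>(1 - \<alpha>_j), and the neighbourhood condition turns into
  \<nu>_k \<zeta>^2 \<le> \<beta> \<mu>_k. Since \<nu>_k(\<zeta>e, 0, \<zeta>e) + (1 - \<nu>_k)(x*, l*, s*) has the same residuals as the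
  iterate, monotonicity of the KKT system (Q is positive definite on ker A) bounds
  \<nu>_k \<zeta> \<Sum>(x_i + s_i) by O(n \<mu>_k); the same argument applied to the Newton direction bounds
  \<Sum>(s_i/x_i \<Delta>x_i^2 + x_i/s_i \<Delta>s_i^2) by O(n^2 \<mu>_k). Hence |\<Delta>x_i \<Delta>s_i| \<le> L \<mu>_k with L = O(n^2), every
  step length up to c/L keeps the iterate in the neighbourhood and reduces \<mu> by the factor
  1 - 0.01 \<alpha>, and the maximal step length is at least c/L. So \<mu>_k \<le> (1 - c'/n^2)^k \<zeta>^2, which
  is below \<epsilon> after O(n^2 ln(\<zeta>^2/\<epsilon>)) = O(n^2 |ln \<epsilon>|) iterations.\<close>

section \<open>Monotonicity of the KKT system\<close>

lemma inner_nonneg_of_homogeneous_kkt: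
  assumes sa: "standing_assms n m Q A"
    and Au: "\<forall>k<m. Amul n A u k = 0"
    and eq: "\<forall>i\<le>n. (\<Sum>j\<le>n. Q i j * u j) + (\<Sum>k<m. A k i * w k) - v i = 0"
  shows "0 \<le> (\<Sum>i\<le>n. u i * v i)"
proof -
  have "(\<Sum>i\<le>n. u i * v i) = (\<Sum>i\<le>n. u i * ((\<Sum>j\<le>n. Q i j * u j) + (\<Sum>k<m. A k i * w k)))"
    using eq by (intro sum.cong) (auto simp: algebra_simps)
  also have "\<dots> = quad n Q u + (\<Sum>k<m. w k * Amul n A u k)"
    unfolding quad_def Amul_def distrib_left sum.distrib sum_distrib_left
    by (subst (2) sum.swap) (simp add: mult_ac)
  also have "\<dots> = quad n Q u" using Au by simp
  finally have uv: "(\<Sum>i\<le>n. u i * v i) = quad n Q u" .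
  show ?thesis
  proof (cases "\<exists>j\<le>n. u j \<noteq> 0")
    case True
    then have "quad n Q u > 0" using sa Au unfolding standing_assms_def by blast
    then show ?thesis using uv by simp
  next
    case False
    then show ?thesis using uv unfolding quad_def by simp
  qed
qed

lemma rd_shift:
  "rd n m Q q A (\<lambda>i. x i + t * (x' i - x'' i)) (\<lambda>k. l k + t * (l' k - l'' k))
      (\<lambda>i. s i + t * (s' i - s'' i)) i
   = rd n m Q q A x l s i + t * (rd n m Q q A x' l' s' i - rd n m Q q A x'' l'' s'' i)"
  by (simp add: rd_def sum.distrib sum_subtractf sum_distrib_left algebra_simps)

lemma rp_shift:
  "rp n A (\<lambda>i. x i + t * (x' i - x'' i)) k = rp n A x k + t * (rp n A x' k - rp n A x'' k)"
  by (simp add: rp_def Amul_def sum.distrib sum_subtractf sum_distrib_left algebra_simps)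

lemma inner_nonneg_of_equal_residuals:
  assumes sa: "standing_assms n m Q A"
    and rd_eq: "\<forall>i\<le>n. rd n m Q q A x l s i = rd n m Q q A x' l' s' i"
    and rp_eq: "\<forall>k<m. rp n A x k = rp n A x' k"
  shows "0 \<le> (\<Sum>i\<le>n. (x i - x' i) * (s i - s' i))"
proof (rule inner_nonneg_of_homogeneous_kkt[OF sa, where w = "\<lambda>k. l k - l' k"])
  show "\<forall>k<m. Amul n A (\<lambda>i. x i - x' i) k = 0"
    using rp_eq by (simp add: rp_def Amul_def sum_subtractf algebra_simps)
  show "\<forall>i\<le>n. (\<Sum>j\<le>n. Q i j * (x j - x' j)) + (\<Sum>k<m. A k i * (l k - l' k)) - (s i - s' i) = 0"
    using rd_eq by (simp add: rd_def sum_subtractf algebra_simps)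
qed

section \<open>Newton steps\<close>

lemma mu_pos:
  assumes "\<forall>i\<le>n. x i > 0 \<and> s i > 0"
  shows "0 < mu n x s"
  unfolding mu_def using assms by (intro divide_pos_pos sum_pos) auto

lemma rd_newton_step:
  assumes "newton_dir n m Q q A \<sigma> x l s dx dl ds" "i \<le> n"
  shows "rd n m Q q A (\<lambda>i. x i + \<alpha> * dx i) (\<lambda>k. l k + \<alpha> * dl k) (\<lambda>i. s i + \<alpha> * ds i) i
       = (1 - \<alpha>) * rd n m Q q A x l s i"
proof -
  have "rd n m Q q A (\<lambda>i. x i + \<alpha> * dx i) (\<lambda>k. l k + \<alpha> * dl k) (\<lambda>i. s i + \<alpha> * ds i) i
      = rd n m Q q A x l s i + \<alpha> * ((\<Sum>j\<le>n. Q i j * dx j) + (\<Sum>k<m. A k i * dl k) - ds i)"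
    by (simp add: rd_def distrib_left sum.distrib sum_distrib_left algebra_simps)
  also have "(\<Sum>j\<le>n. Q i j * dx j) + (\<Sum>k<m. A k i * dl k) - ds i = - rd n m Q q A x l s i"
    using assms unfolding newton_dir_def by blast
  finally show ?thesis by (simp add: algebra_simps)
qed

lemma rp_newton_step:
  assumes "newton_dir n m Q q A \<sigma> x l s dx dl ds" "k < m"
  shows "rp n A (\<lambda>i. x i + \<alpha> * dx i) k = (1 - \<alpha>) * rp n A x k"
proof -
  have "rp n A (\<lambda>i. x i + \<alpha> * dx i) k = rp n A x k + \<alpha> * Amul n A dx k"
    by (simp add: rp_def Amul_def distrib_left sum.distrib sum_distrib_left algebra_simps)
  then show ?thesis using assms unfolding newton_dir_def by (simp add: algebra_simps)
qed

lemma res_norm_newton_step: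
  assumes "newton_dir n m Q q A \<sigma> x l s dx dl ds" "\<alpha> \<le> 1"
  shows "res_norm n m Q q A (\<lambda>i. x i + \<alpha> * dx i) (\<lambda>k. l k + \<alpha> * dl k) (\<lambda>i. s i + \<alpha> * ds i)
       = (1 - \<alpha>) * res_norm n m Q q A x l s"
  using assms rd_newton_step[OF assms(1)] rp_newton_step[OF assms(1)]
  by (simp add: res_norm_def power_mult_distrib sum_distrib_left[symmetric]
      distrib_left[symmetric] real_sqrt_mult)

lemma complementarity_newton_step:
  assumes "newton_dir n m Q q A \<sigma> x l s dx dl ds" "i \<le> n"
  shows "(x i + \<alpha> * dx i) * (s i + \<alpha> * ds i)
       = (1 - \<alpha>) * (x i * s i) + \<alpha> * \<sigma> * mu n x s + \<alpha>\<^sup>2 * (dx i * ds i)"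
proof -
  have centering: "s i * dx i + x i * ds i = - (x i * s i) + \<sigma> * mu n x s"
    using assms unfolding newton_dir_def by blast
  have "(x i + \<alpha> * dx i) * (s i + \<alpha> * ds i)
      = x i * s i + \<alpha> * (s i * dx i + x i * ds i) + \<alpha>\<^sup>2 * (dx i * ds i)"
    by (simp add: algebra_simps power2_eq_square)
  also have "\<dots> = x i * s i + \<alpha> * (- (x i * s i) + \<sigma> * mu n x s) + \<alpha>\<^sup>2 * (dx i * ds i)"
    unfolding centering ..
  finally show ?thesis by (simp add: algebra_simps)
qed

lemma mu_newton_step:
  assumes "newton_dir n m Q q A \<sigma> x l s dx dl ds"
  shows "mu n (\<lambda>i. x i + \<alpha> * dx i) (\<lambda>i. s i + \<alpha> * ds i)
       = (1 - \<alpha> + \<alpha> * \<sigma>) * mu n x s + \<alpha>\<^sup>2 * ((\<Sum>i\<le>n. dx i * ds i) / real (n + 1))"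
proof -
  have "(\<Sum>i\<le>n. (x i + \<alpha> * dx i) * (s i + \<alpha> * ds i))
      = (\<Sum>i\<le>n. (1 - \<alpha>) * (x i * s i) + \<alpha> * \<sigma> * mu n x s + \<alpha>\<^sup>2 * (dx i * ds i))"
    using complementarity_newton_step[OF assms] by simp
  also have "\<dots> = (1 - \<alpha>) * (\<Sum>i\<le>n. x i * s i) + real (n + 1) * (\<alpha> * \<sigma> * mu n x s)
      + \<alpha>\<^sup>2 * (\<Sum>i\<le>n. dx i * ds i)"
    by (simp add: sum.distrib sum_distrib_left)
  also have "(\<Sum>i\<le>n. x i * s i) = real (n + 1) * mu n x s"
    unfolding mu_def by simp
  finally show ?thesis
    unfolding mu_def[of n "\<lambda>i. x i + \<alpha> * dx i"] by (simp add: field_simps)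
qed

section \<open>Bounds on the Newton direction\<close>

lemma shifted_product_le:
  fixes x s a b \<nu> \<zeta> :: real
  assumes "0 < x" "0 < s" "0 \<le> a" "0 \<le> b" "0 \<le> \<nu>" "\<nu> \<le> 1" "0 \<le> \<zeta>"
  shows "(x - (a + \<nu>*(\<zeta> - a))) * (s - (b + \<nu>*(\<zeta> - b)))
       \<le> x*s - \<nu>*\<zeta>*(x + s) + \<nu>\<^sup>2*\<zeta>\<^sup>2 + \<nu>*\<zeta>*(a + b) + (1-\<nu>)\<^sup>2*(a*b)"
proof -
  have "(x - (a + \<nu>*(\<zeta> - a))) * (s - (b + \<nu>*(\<zeta> - b)))
      = x*s - \<nu>*\<zeta>*(x + s) + \<nu>\<^sup>2*\<zeta>\<^sup>2 + (1-\<nu>)*(\<nu>*\<zeta>*(a + b))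
        + (1-\<nu>)\<^sup>2*(a*b) - (1-\<nu>)*(x*b + s*a)"
    by (simp add: algebra_simps power2_eq_square)
  moreover have "0 \<le> (1-\<nu>)*(x*b + s*a)" using assms by simp
  moreover have "(1-\<nu>)*(\<nu>*\<zeta>*(a + b)) \<le> \<nu>*\<zeta>*(a + b)"
    using assms by (intro mult_left_le_one_le) auto
  ultimately show ?thesis by linarith
qed

lemma components_le_of_norm_le:
  fixes xs ss :: "nat \<Rightarrow> real"
  assumes "sqrt ((\<Sum>i\<le>n. (xs i)\<^sup>2) + (\<Sum>i\<le>n. (ss i)\<^sup>2)) \<le> \<zeta>" "i \<le> n"
  shows "xs i \<le> \<zeta>" and "ss i \<le> \<zeta>"
proof -
  have "(xs i)\<^sup>2 \<le> (\<Sum>i\<le>n. (xs i)\<^sup>2)" "(ss i)\<^sup>2 \<le> (\<Sum>i\<le>n. (ss i)\<^sup>2)"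
    using assms(2) by (auto intro: member_le_sum)
  moreover have "0 \<le> (\<Sum>i\<le>n. (xs i)\<^sup>2)" "0 \<le> (\<Sum>i\<le>n. (ss i)\<^sup>2)"
    by (auto intro: sum_nonneg)
  ultimately have "sqrt ((xs i)\<^sup>2) \<le> \<zeta>" "sqrt ((ss i)\<^sup>2) \<le> \<zeta>"
    using assms(1) real_sqrt_le_mono[of "(xs i)\<^sup>2"] real_sqrt_le_mono[of "(ss i)\<^sup>2"]
    by (smt (verit))+
  then show "xs i \<le> \<zeta>" "ss i \<le> \<zeta>" by auto
qed

text \<open>The point (x, l, s) and the convex combination \<nu>(\<zeta>e, 0, \<zeta>e) + (1 - \<nu>)(x*, l*, s*) have the
  same residuals, so the inner product of their x- and s-differences is nonnegative.\<close>
lemma infeasibility_l1_bound: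
  assumes sa: "standing_assms n m Q A" and opt: "optimal_pd n m Q q A xs ls ss"
    and xs_le: "\<forall>i\<le>n. xs i \<le> \<zeta>" and ss_le: "\<forall>i\<le>n. ss i \<le> \<zeta>"
    and pos: "\<forall>i\<le>n. x i > 0 \<and> s i > 0"
    and \<nu>: "0 \<le> \<nu>" "\<nu> \<le> 1"
    and rd_scaled: "\<forall>i\<le>n. rd n m Q q A x l s i = \<nu> * rd n m Q q A (\<lambda>i. \<zeta>) (\<lambda>j. 0) (\<lambda>i. \<zeta>) i"
    and rp_scaled: "\<forall>k<m. rp n A x k = \<nu> * rp n A (\<lambda>i. \<zeta>) k"
    and \<nu>_le: "\<nu> * \<zeta>\<^sup>2 \<le> \<beta> * mu n x s" and \<beta>: "\<beta> \<ge> 1"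
  shows "\<nu> * \<zeta> * (\<Sum>i\<le>n. x i + s i) \<le> 4 * \<beta> * real (n + 1) * mu n x s"
proof -
  define N where "N = real (n + 1)"
  define S where "S = (\<Sum>i\<le>n. x i + s i)"
  have rd_opt: "\<forall>i\<le>n. rd n m Q q A xs ls ss i = 0" and rp_opt: "\<forall>k<m. rp n A xs k = 0"
    and opt_nonneg: "\<forall>i\<le>n. xs i \<ge> 0 \<and> ss i \<ge> 0" and compl: "(\<Sum>i\<le>n. xs i * ss i) = 0"
    using opt unfolding optimal_pd_def by auto
  have \<zeta>: "\<zeta> \<ge> 0" using xs_le opt_nonneg by (meson order_trans order_refl)
  have "\<forall>i\<le>n. rd n m Q q A x l s i = rd n m Q q A (\<lambda>i. xs i + \<nu> * (\<zeta> - xs i))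
      (\<lambda>k. ls k + \<nu> * (0 - ls k)) (\<lambda>i. ss i + \<nu> * (\<zeta> - ss i)) i"
    using rd_scaled rd_opt rd_shift[of n m Q q A xs \<nu> "\<lambda>i. \<zeta>" xs ls "\<lambda>k. 0" ls ss "\<lambda>i. \<zeta>" ss]
    by simp
  moreover have "\<forall>k<m. rp n A x k = rp n A (\<lambda>i. xs i + \<nu> * (\<zeta> - xs i)) k"
    using rp_scaled rp_opt rp_shift[of n A xs \<nu> "\<lambda>i. \<zeta>" xs] by simp
  ultimately have "0 \<le> (\<Sum>i\<le>n. (x i - (xs i + \<nu> * (\<zeta> - xs i))) * (s i - (ss i + \<nu> * (\<zeta> - ss i))))"
    by (rule inner_nonneg_of_equal_residuals[OF sa])
  also have "\<dots> \<le> (\<Sum>i\<le>n. x i * s i - \<nu>*\<zeta>*(x i + s i) + \<nu>\<^sup>2*\<zeta>\<^sup>2 + \<nu>*\<zeta>*(xs i + ss i)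
      + (1-\<nu>)\<^sup>2 * (xs i * ss i))"
    using pos opt_nonneg \<nu> \<zeta> by (intro sum_mono shifted_product_le) auto
  also have "\<dots> = N * mu n x s - \<nu>*\<zeta>*S + N*(\<nu>\<^sup>2*\<zeta>\<^sup>2) + \<nu>*\<zeta>*(\<Sum>i\<le>n. xs i + ss i)"
    unfolding S_def N_def mu_def
    by (simp add: sum.distrib sum_subtractf sum_distrib_left[symmetric] compl)
  finally have inner: "0 \<le> N * mu n x s - \<nu>*\<zeta>*S + N*(\<nu>\<^sup>2*\<zeta>\<^sup>2) + \<nu>*\<zeta>*(\<Sum>i\<le>n. xs i + ss i)" .
  have "\<nu>*\<zeta>*(\<Sum>i\<le>n. xs i + ss i) \<le> \<nu>*\<zeta>*(\<Sum>i\<le>n. 2*\<zeta>)"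
    using xs_le ss_le \<nu> \<zeta> by (intro mult_left_mono sum_mono) (auto, metis add_mono mult_2)
  then have opt_term: "\<nu>*\<zeta>*(\<Sum>i\<le>n. xs i + ss i) \<le> 2 * N * (\<nu>*\<zeta>\<^sup>2)"
    unfolding N_def by (simp add: power2_eq_square algebra_simps)
  have "\<nu>\<^sup>2*\<zeta>\<^sup>2 \<le> \<nu>*\<zeta>\<^sup>2"
    using \<nu> by (intro mult_right_mono) (auto simp: power2_eq_square mult_left_le_one_le)
  then have "N*(\<nu>\<^sup>2*\<zeta>\<^sup>2) \<le> N*(\<nu>*\<zeta>\<^sup>2)" unfolding N_def by simp
  with inner opt_term have "\<nu>*\<zeta>*S \<le> N * mu n x s + 3 * N * (\<nu>*\<zeta>\<^sup>2)" by linarith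
  also have "\<dots> \<le> N * mu n x s + 3 * N * (\<beta> * mu n x s)"
    using \<nu>_le unfolding N_def by simp
  also have "\<dots> \<le> 4 * \<beta> * N * mu n x s"
  proof -
    have "0 \<le> N * mu n x s" unfolding N_def using mu_pos[OF pos] by simp
    then have "1 * (N * mu n x s) \<le> \<beta> * (N * mu n x s)" by (rule mult_right_mono[OF \<beta>])
    then show ?thesis by (simp add: algebra_simps)
  qed
  finally show ?thesis unfolding S_def N_def .
qed

lemma power2_add_le_twice:
  fixes a b :: real
  shows "(a + b)\<^sup>2 \<le> 2 * a\<^sup>2 + 2 * b\<^sup>2"
  using zero_le_power2[of "a - b"] by (simp add: power2_eq_square algebra_simps)

lemma centering_residual_bound:
  fixes p \<mu> \<gamma> \<sigma> :: real
  assumes "\<gamma> * \<mu> \<le> p" "0 < \<gamma>" "0 < \<mu>" "0 < \<sigma>" "\<sigma> \<le> 1"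
  shows "(\<sigma> * \<mu> - p)\<^sup>2 / p \<le> p + \<mu> / \<gamma>"
proof -
  have p: "0 < p" using assms by (smt (verit) mult_pos_pos)
  have "(\<sigma> * \<mu> - p)\<^sup>2 = p\<^sup>2 - 2*\<sigma>*\<mu>*p + (\<sigma>*\<mu>)\<^sup>2" by (simp add: power2_eq_square algebra_simps)
  also have "\<dots> \<le> p\<^sup>2 + \<mu>\<^sup>2"
  proof -
    have "(\<sigma> * \<mu>)\<^sup>2 \<le> \<mu>\<^sup>2" using assms by (intro power_mono) (auto simp: mult_left_le_one_le)
    moreover have "0 \<le> 2*\<sigma>*\<mu>*p" using assms p by simp
    ultimately show ?thesis by linarith
  qed
  finally have "(\<sigma> * \<mu> - p)\<^sup>2 / p \<le> (p\<^sup>2 + \<mu>\<^sup>2) / p" using p by (simp add: divide_right_mono)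
  also have "\<dots> = p + \<mu>\<^sup>2 / p" using p by (simp add: add_divide_distrib power2_eq_square)
  also have "\<mu>\<^sup>2 / p \<le> \<mu>\<^sup>2 / (\<gamma> * \<mu>)" using assms by (intro frac_le) auto
  also have "\<mu>\<^sup>2 / (\<gamma> * \<mu>) = \<mu> / \<gamma>" using assms by (simp add: power2_eq_square)
  finally show ?thesis by simp
qed

lemma square_div_le_square_div:
  fixes g G p d :: real
  assumes "0 \<le> g" "g \<le> G" "d \<le> p" "0 < d"
  shows "g\<^sup>2 / p \<le> G\<^sup>2 / d"
  using assms by (intro frac_le power_mono) auto

text \<open>The shifts e = \<nu>(\<zeta> - x*_i) and f = \<nu>(\<zeta> - s*_i) turn (dx + e, ds + f) into a solution of
  the homogeneous KKT system; the term -4(dx + e)(ds + f) is the one that the inner-product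
  inequality later cancels.\<close>
lemma scaled_newton_entry_bound:
  fixes x s dx ds e f \<sigma> \<mu> \<gamma> K :: real
  assumes x: "x > 0" and s: "s > 0" and central: "\<gamma> * \<mu> \<le> x * s" and \<gamma>: "\<gamma> > 0" and \<mu>: "\<mu> > 0"
    and \<sigma>: "0 < \<sigma>" "\<sigma> \<le> 1" and newton: "s * dx + x * ds = - (x * s) + \<sigma> * \<mu>"
    and e: "0 \<le> e" "e \<le> K" and f: "0 \<le> f" "f \<le> K"
  shows "s/x * dx\<^sup>2 + x/s * ds\<^sup>2
       \<le> 4 * (x * s + \<mu>/\<gamma>) + 6 * (K\<^sup>2 * (x + s)\<^sup>2 / (\<gamma> * \<mu>)) - 4 * ((dx + e) * (ds + f))"
proof -
  define a b p where "a = dx + e" and "b = ds + f" and "p = x * s"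
  have p: "p > 0" "\<gamma> * \<mu> \<le> p" using x s central by (auto simp: p_def)
  have \<gamma>\<mu>: "\<gamma> * \<mu> > 0" using \<gamma> \<mu> by simp
  have "s/x * dx\<^sup>2 \<le> s/x * (2 * a\<^sup>2 + 2 * e\<^sup>2)"
    using power2_add_le_twice[of a "-e"] x s unfolding a_def by (intro mult_left_mono) auto
  moreover have "x/s * ds\<^sup>2 \<le> x/s * (2 * b\<^sup>2 + 2 * f\<^sup>2)"
    using power2_add_le_twice[of b "-f"] x s unfolding b_def by (intro mult_left_mono) auto
  moreover have "s/x * a\<^sup>2 + x/s * b\<^sup>2 = (s * a + x * b)\<^sup>2 / p - 2 * (a * b)"
    and "s/x * e\<^sup>2 = (s * e)\<^sup>2 / p" and "x/s * f\<^sup>2 = (x * f)\<^sup>2 / p"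
    using x s unfolding p_def by (simp_all add: field_simps power2_eq_square)
  moreover have "(s * a + x * b)\<^sup>2 / p \<le> 2 * ((\<sigma> * \<mu> - p)\<^sup>2 / p) + 2 * ((s * e + x * f)\<^sup>2 / p)"
  proof -
    have "s * a + x * b = (\<sigma> * \<mu> - p) + (s * e + x * f)"
      using newton unfolding a_def b_def p_def by (simp add: algebra_simps)
    then have "(s * a + x * b)\<^sup>2 \<le> 2 * (\<sigma> * \<mu> - p)\<^sup>2 + 2 * (s * e + x * f)\<^sup>2"
      using power2_add_le_twice by presburger
    then show ?thesis using p by (simp add: divide_right_mono add_divide_distrib[symmetric])
  qed
  moreover have "(\<sigma> * \<mu> - p)\<^sup>2 / p \<le> p + \<mu>/\<gamma>"
    using centering_residual_bound[OF p(2) \<gamma> \<mu> \<sigma>] .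
  moreover have "(s * e + x * f)\<^sup>2 / p \<le> (K * (x + s))\<^sup>2 / (\<gamma> * \<mu>)"
  proof (rule square_div_le_square_div)
    have "s * e \<le> s * K" "x * f \<le> x * K" using x s e f by (auto intro: mult_left_mono)
    then show "s * e + x * f \<le> K * (x + s)" by (simp add: algebra_simps)
  qed (use x s e f p \<gamma>\<mu> in auto)
  moreover have "(s * e)\<^sup>2 / p \<le> (K * s)\<^sup>2 / (\<gamma> * \<mu>)" "(x * f)\<^sup>2 / p \<le> (K * x)\<^sup>2 / (\<gamma> * \<mu>)"
    using x s e f p \<gamma>\<mu>
    by (auto intro!: square_div_le_square_div simp: mult.commute[of K] intro: mult_left_mono)
  moreover have "(K * s)\<^sup>2 / (\<gamma> * \<mu>) + (K * x)\<^sup>2 / (\<gamma> * \<mu>) \<le> (K * (x + s))\<^sup>2 / (\<gamma> * \<mu>)"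
    using x s e \<gamma>\<mu> by (auto simp: add_divide_distrib[symmetric] power2_eq_square algebra_simps
        intro!: divide_right_mono)
  ultimately show ?thesis unfolding a_def b_def p_def by (simp add: power_mult_distrib) argo
qed

lemma scaled_sum_squares_le:
  fixes y :: "nat \<Rightarrow> real"
  assumes y: "\<forall>i\<le>n. 0 \<le> y i" and K: "0 \<le> K" and bound: "K * (\<Sum>i\<le>n. y i) \<le> B"
  shows "K\<^sup>2 * (\<Sum>i\<le>n. (y i)\<^sup>2) \<le> B\<^sup>2"
proof -
  have "(\<Sum>i\<le>n. (y i)\<^sup>2) \<le> (\<Sum>i\<le>n. y i * (\<Sum>j\<le>n. y j))"
    using y by (intro sum_mono) (auto simp: power2_eq_square intro!: mult_left_mono member_le_sum)
  also have "\<dots> = (\<Sum>i\<le>n. y i)\<^sup>2" by (simp add: power2_eq_square sum_distrib_right)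
  finally have "K\<^sup>2 * (\<Sum>i\<le>n. (y i)\<^sup>2) \<le> (K * (\<Sum>i\<le>n. y i))\<^sup>2"
    by (simp add: mult_left_mono power_mult_distrib)
  also have "\<dots> \<le> B\<^sup>2"
    using y K bound by (intro power_mono mult_nonneg_nonneg sum_nonneg) auto
  finally show ?thesis .
qed

lemma direction_bound_constants:
  fixes N \<mu> \<beta> \<gamma> :: real
  assumes N: "1 \<le> N" and \<mu>: "0 < \<mu>" and \<beta>: "1 \<le> \<beta>" and \<gamma>: "0 < \<gamma>" "\<gamma> \<le> 1"
  shows "4 * (N * \<mu>) + 4 * (N * \<mu> / \<gamma>) + 96 * (\<beta>\<^sup>2 * N\<^sup>2 * \<mu> / \<gamma>) \<le> 104 * (\<beta>\<^sup>2 * N\<^sup>2 * \<mu> / \<gamma>)"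
proof -
  have "1 * 1 \<le> \<beta>\<^sup>2 * N" using \<beta> N by (intro mult_mono) (auto simp: one_le_power)
  then have "1 * (N * \<mu>) \<le> (\<beta>\<^sup>2 * N) * (N * \<mu>)" using \<mu> N by (intro mult_right_mono) auto
  then have "N * \<mu> \<le> \<beta>\<^sup>2 * N\<^sup>2 * \<mu>" by (simp add: power2_eq_square mult_ac)
  then have "N * \<mu> / \<gamma> \<le> \<beta>\<^sup>2 * N\<^sup>2 * \<mu> / \<gamma>" and "N * \<mu> \<le> N * \<mu> / \<gamma>"
    using \<gamma> \<mu> N by (simp_all add: divide_right_mono le_divide_eq mult_left_le)
  then show ?thesis by argo
qed

text \<open>The full Newton step and the shift of (x, l, s) by \<nu>((x*, l*, s*) - (\<zeta>e, 0, \<zeta>e)) both have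
  zero residuals; their difference is the shifted direction.\<close>
lemma shifted_newton_inner_nonneg:
  assumes sa: "standing_assms n m Q A" and opt: "optimal_pd n m Q q A xs ls ss"
    and rd_scaled: "\<forall>i\<le>n. rd n m Q q A x l s i = \<nu> * rd n m Q q A (\<lambda>i. \<zeta>) (\<lambda>j. 0) (\<lambda>i. \<zeta>) i"
    and rp_scaled: "\<forall>k<m. rp n A x k = \<nu> * rp n A (\<lambda>i. \<zeta>) k"
    and newton: "newton_dir n m Q q A \<sigma> x l s dx dl ds"
  shows "0 \<le> (\<Sum>i\<le>n. (dx i + \<nu> * (\<zeta> - xs i)) * (ds i + \<nu> * (\<zeta> - ss i)))"
proof -
  have rd_opt: "\<forall>i\<le>n. rd n m Q q A xs ls ss i = 0" and rp_opt: "\<forall>k<m. rp n A xs k = 0"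
    using opt unfolding optimal_pd_def by auto
  have "\<forall>i\<le>n. rd n m Q q A (\<lambda>i. x i + dx i) (\<lambda>k. l k + dl k) (\<lambda>i. s i + ds i) i
      = rd n m Q q A (\<lambda>i. x i + \<nu> * (xs i - \<zeta>)) (\<lambda>k. l k + \<nu> * (ls k - 0))
          (\<lambda>i. s i + \<nu> * (ss i - \<zeta>)) i"
    using rd_newton_step[OF newton, of _ 1] rd_scaled rd_opt
      rd_shift[of n m Q q A x \<nu> xs "\<lambda>i. \<zeta>" l ls "\<lambda>k. 0" s ss "\<lambda>i. \<zeta>"]
    by simp
  moreover have "\<forall>k<m. rp n A (\<lambda>i. x i + dx i) k = rp n A (\<lambda>i. x i + \<nu> * (xs i - \<zeta>)) k"
    using rp_newton_step[OF newton, of _ 1] rp_scaled rp_opt rp_shift[of n A x \<nu> xs "\<lambda>i. \<zeta>"]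
    by simp
  ultimately have "0 \<le> (\<Sum>i\<le>n. ((x i + dx i) - (x i + \<nu> * (xs i - \<zeta>)))
      * ((s i + ds i) - (s i + \<nu> * (ss i - \<zeta>))))"
    by (rule inner_nonneg_of_equal_residuals[OF sa])
  then show ?thesis by (simp add: algebra_simps)
qed

lemma scaled_newton_direction_bound:
  assumes sa: "standing_assms n m Q A" and opt: "optimal_pd n m Q q A xs ls ss"
    and xs_le: "\<forall>i\<le>n. xs i \<le> \<zeta>" and ss_le: "\<forall>i\<le>n. ss i \<le> \<zeta>"
    and pos: "\<forall>i\<le>n. x i > 0 \<and> s i > 0"
    and central: "\<forall>i\<le>n. x i * s i \<ge> \<gamma> * mu n x s" and \<gamma>: "0 < \<gamma>" "\<gamma> \<le> 1"
    and \<nu>: "0 \<le> \<nu>" "\<nu> \<le> 1"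
    and rd_scaled: "\<forall>i\<le>n. rd n m Q q A x l s i = \<nu> * rd n m Q q A (\<lambda>i. \<zeta>) (\<lambda>j. 0) (\<lambda>i. \<zeta>) i"
    and rp_scaled: "\<forall>k<m. rp n A x k = \<nu> * rp n A (\<lambda>i. \<zeta>) k"
    and newton: "newton_dir n m Q q A \<sigma> x l s dx dl ds" and \<sigma>: "0 < \<sigma>" "\<sigma> \<le> 1"
    and l1_bound: "\<nu> * \<zeta> * (\<Sum>i\<le>n. x i + s i) \<le> 4 * \<beta> * real (n + 1) * mu n x s"
    and \<beta>: "\<beta> \<ge> 1"
  shows "(\<Sum>i\<le>n. s i / x i * (dx i)\<^sup>2 + x i / s i * (ds i)\<^sup>2)
       \<le> 104 * \<beta>\<^sup>2 * (real (n + 1))\<^sup>2 * mu n x s / \<gamma>"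
proof -
  define a where "a = (\<lambda>i. dx i + \<nu> * (\<zeta> - xs i))"
  define b where "b = (\<lambda>i. ds i + \<nu> * (\<zeta> - ss i))"
  define N where "N = real (n + 1)"
  define \<mu> where "\<mu> = mu n x s"
  define K where "K = \<nu> * \<zeta>"
  have opt_nonneg: "\<forall>i\<le>n. xs i \<ge> 0 \<and> ss i \<ge> 0" using opt unfolding optimal_pd_def by auto
  have newton_c: "\<forall>i\<le>n. s i * dx i + x i * ds i = - (x i * s i) + \<sigma> * \<mu>"
    using newton unfolding newton_dir_def \<mu>_def by auto
  have N: "N \<ge> 1" unfolding N_def by simp
  have \<mu>_pos: "\<mu> > 0" unfolding \<mu>_def by (rule mu_pos[OF pos])
  have \<zeta>: "\<zeta> \<ge> 0" using xs_le opt_nonneg by (meson order_trans order_refl)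
  have ab: "0 \<le> (\<Sum>i\<le>n. a i * b i)"
    unfolding a_def b_def by (rule shifted_newton_inner_nonneg[OF sa opt rd_scaled rp_scaled newton])
  have "(\<Sum>i\<le>n. s i / x i * (dx i)\<^sup>2 + x i / s i * (ds i)\<^sup>2)
     \<le> (\<Sum>i\<le>n. 4 * (x i * s i + \<mu>/\<gamma>) + 6 * (K\<^sup>2 * (x i + s i)\<^sup>2 / (\<gamma> * \<mu>)) - 4 * (a i * b i))"
  proof (intro sum_mono)
    fix i assume "i \<in> {..n}"
    then have i: "i \<le> n" by simp
    have "xs i \<ge> 0" "xs i \<le> \<zeta>" "ss i \<ge> 0" "ss i \<le> \<zeta>" using opt_nonneg xs_le ss_le i by auto
    then have "0 \<le> \<nu> * (\<zeta> - xs i)" "\<nu> * (\<zeta> - xs i) \<le> K" "0 \<le> \<nu> * (\<zeta> - ss i)" "\<nu> * (\<zeta> - ss i) \<le> K"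
      unfolding K_def using \<nu> by (auto intro: mult_left_mono)
    then show "s i / x i * (dx i)\<^sup>2 + x i / s i * (ds i)\<^sup>2
      \<le> 4 * (x i * s i + \<mu>/\<gamma>) + 6 * (K\<^sup>2 * (x i + s i)\<^sup>2 / (\<gamma> * \<mu>)) - 4 * (a i * b i)"
      unfolding a_def b_def using pos central newton_c \<gamma> \<mu>_pos \<sigma> i
      by (intro scaled_newton_entry_bound) (auto simp: \<mu>_def)
  qed
  also have "\<dots> = 4 * (N * \<mu>) + 4 * N * (\<mu>/\<gamma>) + 6 * (K\<^sup>2 * (\<Sum>i\<le>n. (x i + s i)\<^sup>2) / (\<gamma> * \<mu>))
      - 4 * (\<Sum>i\<le>n. a i * b i)"
  proof -
    have "(\<Sum>i\<le>n. x i * s i) = N * \<mu>" unfolding N_def \<mu>_def mu_def by simp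
    then show ?thesis unfolding N_def
      by (simp add: sum.distrib sum_subtractf sum_distrib_left[symmetric] sum_divide_distrib[symmetric])
  qed
  also have "K\<^sup>2 * (\<Sum>i\<le>n. (x i + s i)\<^sup>2) \<le> (4 * \<beta> * N * \<mu>)\<^sup>2"
    using pos \<nu> \<zeta> l1_bound unfolding K_def N_def \<mu>_def
    by (intro scaled_sum_squares_le) (auto simp: less_imp_le)
  also have "(4 * \<beta> * N * \<mu>)\<^sup>2 / (\<gamma> * \<mu>) = 16 * (\<beta>\<^sup>2 * N\<^sup>2 * \<mu> / \<gamma>)"
    using \<mu>_pos \<gamma> by (simp add: field_simps power2_eq_square)
  finally have bound: "(\<Sum>i\<le>n. s i / x i * (dx i)\<^sup>2 + x i / s i * (ds i)\<^sup>2)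
      \<le> 4 * (N * \<mu>) + 4 * (N * \<mu> / \<gamma>) + 96 * (\<beta>\<^sup>2 * N\<^sup>2 * \<mu> / \<gamma>)"
    using ab \<gamma> \<mu>_pos by (simp add: divide_right_mono)
  with direction_bound_constants[OF N \<mu>_pos \<beta> \<gamma>]
  have "(\<Sum>i\<le>n. s i / x i * (dx i)\<^sup>2 + x i / s i * (ds i)\<^sup>2) \<le> 104 * (\<beta>\<^sup>2 * N\<^sup>2 * \<mu> / \<gamma>)"
    by linarith
  then show ?thesis unfolding N_def \<mu>_def by simp
qed

section \<open>Acceptable step lengths\<close>

lemma abs_mult_le_scaled_squares:
  fixes x s dx ds :: real
  assumes "x > 0" "s > 0"
  shows "\<bar>dx * ds\<bar> \<le> (s/x * dx\<^sup>2 + x/s * ds\<^sup>2) / 2"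
proof -
  have "2 * (x * s) * \<bar>dx * ds\<bar> \<le> s\<^sup>2 * dx\<^sup>2 + x\<^sup>2 * ds\<^sup>2"
    using zero_le_power2[of "s * \<bar>dx\<bar> - x * \<bar>ds\<bar>"]
    by (simp add: power2_eq_square algebra_simps abs_mult)
  also have "\<dots> = 2 * (x * s) * ((s/x * dx\<^sup>2 + x/s * ds\<^sup>2) / 2)"
    using assms by (simp add: field_simps power2_eq_square)
  finally show ?thesis using assms by simp
qed

lemma damped_step_size:
  fixes \<gamma> \<sigma> \<sigma>min L \<alpha> :: real
  assumes \<gamma>: "0 < \<gamma>" "\<gamma> < 1" and \<sigma>: "0 < \<sigma>min" "\<sigma>min \<le> \<sigma>" "\<sigma> \<le> 1/2" and L: "L \<ge> 1"
    and \<alpha>: "0 \<le> \<alpha>" "\<alpha> \<le> \<sigma>min * (1 - \<gamma>) / (2 * L)"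
  shows "2 * (\<alpha> * L) \<le> \<sigma> * (1 - \<gamma>)" and "\<alpha> * L \<le> 1/4" and "\<alpha> \<le> 1/4"
proof -
  have "\<alpha> * L \<le> \<sigma>min * (1 - \<gamma>) / 2" using \<alpha> L by (simp add: field_simps)
  moreover have "\<sigma>min * (1 - \<gamma>) \<le> \<sigma> * (1 - \<gamma>)" "\<sigma>min * (1 - \<gamma>) \<le> 1/2 * 1"
    using \<sigma> \<gamma> by (intro mult_mono; simp)+
  ultimately show "2 * (\<alpha> * L) \<le> \<sigma> * (1 - \<gamma>)" and small: "\<alpha> * L \<le> 1/4" by linarith+
  show "\<alpha> \<le> 1/4" using small \<alpha> L by (smt (verit) mult_le_cancel_left1)
qed

text \<open>Every second-order term \<alpha>^2 t with |t| \<le> L\<mu> is at most \<alpha>(\<alpha>L)\<mu>, and 2\<alpha>L \<le> \<sigma>(1 - \<gamma>) leaves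
  room for it in the centring term \<alpha>\<sigma>\<mu>.\<close>
lemma damped_mu_bounds:
  fixes \<mu> t \<gamma> \<sigma> \<sigma>min L \<alpha> :: real
  assumes \<mu>: "\<mu> > 0" and \<gamma>: "0 < \<gamma>" "\<gamma> < 1"
    and \<sigma>: "0 < \<sigma>min" "\<sigma>min \<le> \<sigma>" "\<sigma> \<le> 1/2" and L: "L \<ge> 1"
    and \<alpha>: "0 \<le> \<alpha>" "\<alpha> \<le> \<sigma>min * (1 - \<gamma>) / (2 * L)" and t: "\<bar>t\<bar> \<le> L * \<mu>"
  shows "(1 - \<alpha>) * \<mu> \<le> (1 - \<alpha> + \<alpha> * \<sigma>) * \<mu> + \<alpha>\<^sup>2 * t"
    and "(1 - \<alpha> + \<alpha> * \<sigma>) * \<mu> + \<alpha>\<^sup>2 * t \<le> (1 - 0.01 * \<alpha>) * \<mu>"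
proof -
  note size = damped_step_size[OF \<gamma> \<sigma> L \<alpha>]
  have t_term: "\<bar>\<alpha>\<^sup>2 * t\<bar> \<le> \<alpha> * (\<alpha> * L) * \<mu>"
    using mult_left_mono[OF t, of "\<alpha>\<^sup>2"] by (simp add: power2_eq_square mult_ac abs_mult)
  have "\<alpha> * L \<le> \<sigma>" using size(1) \<alpha> L \<gamma> \<sigma> by (smt (verit) mult_left_le mult_nonneg_nonneg)
  then have "\<alpha> * (\<alpha> * L) * \<mu> \<le> \<alpha> * \<sigma> * \<mu>" using \<alpha> \<mu> by (intro mult_right_mono mult_left_mono) auto
  then show "(1 - \<alpha>) * \<mu> \<le> (1 - \<alpha> + \<alpha> * \<sigma>) * \<mu> + \<alpha>\<^sup>2 * t"
    using t_term by (simp add: algebra_simps abs_le_iff)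
  have "\<alpha> * (\<alpha> * L) * \<mu> \<le> \<alpha> * (0.99 - \<sigma>) * \<mu>"
    using size(2) \<sigma> \<alpha> \<mu> by (intro mult_right_mono mult_left_mono) auto
  then show "(1 - \<alpha> + \<alpha> * \<sigma>) * \<mu> + \<alpha>\<^sup>2 * t \<le> (1 - 0.01 * \<alpha>) * \<mu>"
    using t_term by (simp add: algebra_simps abs_le_iff)
qed

lemma damped_centrality:
  fixes \<mu> p d t \<gamma> \<sigma> \<sigma>min L \<alpha> :: real
  assumes \<mu>: "\<mu> > 0" and p: "\<gamma> * \<mu> \<le> p" and \<gamma>: "0 < \<gamma>" "\<gamma> < 1"
    and \<sigma>: "0 < \<sigma>min" "\<sigma>min \<le> \<sigma>" "\<sigma> \<le> 1/2" and L: "L \<ge> 1"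
    and \<alpha>: "0 \<le> \<alpha>" "\<alpha> \<le> \<sigma>min * (1 - \<gamma>) / (2 * L)"
    and d: "\<bar>d\<bar> \<le> L * \<mu>" and t: "\<bar>t\<bar> \<le> L * \<mu>"
  shows "\<gamma> * ((1 - \<alpha> + \<alpha> * \<sigma>) * \<mu> + \<alpha>\<^sup>2 * t) \<le> (1 - \<alpha>) * p + \<alpha> * \<sigma> * \<mu> + \<alpha>\<^sup>2 * d"
proof -
  define h where "h = \<alpha> * L"
  note size = damped_step_size[OF \<gamma> \<sigma> L \<alpha>, folded h_def]
  have "\<alpha>\<^sup>2 * \<bar>d\<bar> \<le> \<alpha>\<^sup>2 * (L * \<mu>)" "\<alpha>\<^sup>2 * \<bar>t\<bar> \<le> \<alpha>\<^sup>2 * (L * \<mu>)"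
    using d t by (simp_all add: mult_left_mono)
  moreover have "- (\<alpha>\<^sup>2 * \<bar>d\<bar>) \<le> \<alpha>\<^sup>2 * d" using mult_left_mono[of "- \<bar>d\<bar>" d "\<alpha>\<^sup>2"] by simp
  ultimately have d_term: "- (\<alpha> * h * \<mu>) \<le> \<alpha>\<^sup>2 * d" and t_term: "\<bar>\<alpha>\<^sup>2 * t\<bar> \<le> \<alpha> * h * \<mu>"
    unfolding h_def by (simp_all add: power2_eq_square mult_ac abs_mult)
  have "(1 - \<alpha>) * (\<gamma> * \<mu>) \<le> (1 - \<alpha>) * p" using p size(3) by (intro mult_left_mono) auto
  moreover have "\<gamma> * (\<alpha>\<^sup>2 * t) \<le> \<alpha> * h * \<mu>"
    using t_term \<gamma> by (smt (verit) abs_ge_self mult_left_le_one_le mult_left_mono abs_ge_zero)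
  moreover have "\<alpha> * \<mu> * (2 * h) \<le> \<alpha> * \<mu> * (\<sigma> * (1 - \<gamma>))"
    using size(1) \<alpha> \<mu> by (intro mult_left_mono) auto
  ultimately show ?thesis using d_term by (simp add: algebra_simps)
qed

lemma pos_of_product_pos_on_segment:
  fixes x s dx ds a :: real
  assumes "0 < x" "0 < s" "0 \<le> a"
    and product_pos: "\<And>\<alpha>. 0 \<le> \<alpha> \<Longrightarrow> \<alpha> \<le> a \<Longrightarrow> 0 < (x + \<alpha> * dx) * (s + \<alpha> * ds)"
  shows "0 < x + a * dx" and "0 < s + a * ds"
proof -
  have root: "\<exists>\<alpha>. 0 \<le> \<alpha> \<and> \<alpha> \<le> a \<and> y + \<alpha> * dy = 0" if "0 < y" "y + a * dy \<le> 0" for y dy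
  proof -
    have "dy < 0" using that \<open>0 \<le> a\<close> by (smt (verit) mult_nonneg_nonneg)
    with that show ?thesis by (intro exI[of _ "y / - dy"]) (auto simp: field_simps)
  qed
  show "0 < x + a * dx"
    using root[of x dx] product_pos assms(1) by force
  show "0 < s + a * ds"
    using root[of s ds] product_pos assms(2) by force
qed

lemma in_nbhd_residual_ratio_newton_step:
  assumes newton: "newton_dir n m Q q A \<sigma> x l s dx dl ds" and \<alpha>: "\<alpha> < 1"
    and \<mu>: "0 < mu n x s" and \<mu>_new: "(1 - \<alpha>) * mu n x s \<le> mu n (\<lambda>i. x i + \<alpha> * dx i) (\<lambda>i. s i + \<alpha> * ds i)"
    and ratio: "res_norm n m Q q A x l s / mu n x s \<le> B"
  shows "res_norm n m Q q A (\<lambda>i. x i + \<alpha> * dx i) (\<lambda>k. l k + \<alpha> * dl k) (\<lambda>i. s i + \<alpha> * ds i)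
         / mu n (\<lambda>i. x i + \<alpha> * dx i) (\<lambda>i. s i + \<alpha> * ds i) \<le> B"
proof -
  have R: "0 \<le> res_norm n m Q q A x l s" unfolding res_norm_def by (simp add: sum_nonneg)
  have "res_norm n m Q q A (\<lambda>i. x i + \<alpha> * dx i) (\<lambda>k. l k + \<alpha> * dl k) (\<lambda>i. s i + \<alpha> * ds i)
         / mu n (\<lambda>i. x i + \<alpha> * dx i) (\<lambda>i. s i + \<alpha> * ds i)
      = (1 - \<alpha>) * res_norm n m Q q A x l s / mu n (\<lambda>i. x i + \<alpha> * dx i) (\<lambda>i. s i + \<alpha> * ds i)"
    using res_norm_newton_step[OF newton] \<alpha> by simp
  also have "\<dots> \<le> (1 - \<alpha>) * res_norm n m Q q A x l s / ((1 - \<alpha>) * mu n x s)"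
  proof (rule divide_left_mono)
    have "0 < (1 - \<alpha>) * mu n x s" using \<alpha> \<mu> by simp
    then show "0 < mu n (\<lambda>i. x i + \<alpha> * dx i) (\<lambda>i. s i + \<alpha> * ds i) * ((1 - \<alpha>) * mu n x s)"
      using \<mu>_new by simp
  qed (use \<mu>_new \<alpha> R in auto)
  also have "\<dots> = res_norm n m Q q A x l s / mu n x s" using \<alpha> by simp
  finally show ?thesis using ratio by simp
qed

lemma damped_newton_step_bounds:
  assumes pos: "\<forall>i\<le>n. x i > 0 \<and> s i > 0" and central: "\<forall>i\<le>n. \<gamma> * mu n x s \<le> x i * s i"
    and newton: "newton_dir n m Q q A \<sigma> x l s dx dl ds"
    and \<gamma>: "0 < \<gamma>" "\<gamma> < 1" and \<sigma>: "0 < \<sigma>min" "\<sigma>min \<le> \<sigma>" "\<sigma> \<le> 1/2" and L: "L \<ge> 1"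
    and product_bound: "\<forall>i\<le>n. \<bar>dx i * ds i\<bar> \<le> L * mu n x s"
    and sum_bound: "\<bar>\<Sum>i\<le>n. dx i * ds i\<bar> \<le> L * mu n x s"
    and \<alpha>: "0 \<le> \<alpha>" "\<alpha> \<le> \<sigma>min * (1 - \<gamma>) / (2 * L)"
  shows "\<forall>i\<le>n. \<gamma> * mu n (\<lambda>i. x i + \<alpha> * dx i) (\<lambda>i. s i + \<alpha> * ds i)
            \<le> (x i + \<alpha> * dx i) * (s i + \<alpha> * ds i)"
    and "(1 - \<alpha>) * mu n x s \<le> mu n (\<lambda>i. x i + \<alpha> * dx i) (\<lambda>i. s i + \<alpha> * ds i)"
    and "mu n (\<lambda>i. x i + \<alpha> * dx i) (\<lambda>i. s i + \<alpha> * ds i) \<le> (1 - 0.01 * \<alpha>) * mu n x s"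
proof -
  define \<mu> where "\<mu> = mu n x s"
  define t where "t = (\<Sum>i\<le>n. dx i * ds i) / real (n + 1)"
  have \<mu>_pos: "\<mu> > 0" unfolding \<mu>_def by (rule mu_pos[OF pos])
  have "\<bar>t\<bar> \<le> \<bar>\<Sum>i\<le>n. dx i * ds i\<bar>" unfolding t_def by (simp add: divide_le_eq mult_le_cancel_left1)
  then have t: "\<bar>t\<bar> \<le> L * \<mu>" using sum_bound unfolding \<mu>_def by simp
  have mu_step: "mu n (\<lambda>i. x i + \<alpha> * dx i) (\<lambda>i. s i + \<alpha> * ds i) = (1 - \<alpha> + \<alpha> * \<sigma>) * \<mu> + \<alpha>\<^sup>2 * t"
    using mu_newton_step[OF newton] unfolding \<mu>_def t_def by simp
  show "\<forall>i\<le>n. \<gamma> * mu n (\<lambda>i. x i + \<alpha> * dx i) (\<lambda>i. s i + \<alpha> * ds i)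
            \<le> (x i + \<alpha> * dx i) * (s i + \<alpha> * ds i)"
    unfolding mu_step using complementarity_newton_step[OF newton] central product_bound
    by (auto simp: \<mu>_def intro!: damped_centrality[OF \<mu>_pos[unfolded \<mu>_def] _ \<gamma> \<sigma> L \<alpha>
          _ t[unfolded \<mu>_def]])
  show "(1 - \<alpha>) * mu n x s \<le> mu n (\<lambda>i. x i + \<alpha> * dx i) (\<lambda>i. s i + \<alpha> * ds i)"
    and "mu n (\<lambda>i. x i + \<alpha> * dx i) (\<lambda>i. s i + \<alpha> * ds i) \<le> (1 - 0.01 * \<alpha>) * mu n x s"
    unfolding mu_step \<mu>_def[symmetric] using damped_mu_bounds[OF \<mu>_pos \<gamma> \<sigma> L \<alpha> t] by auto
qed

lemma step_ok_of_product_bounds: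
  assumes nbhd: "in_nbhd n m Q q A \<gamma> \<beta> x0 l0 s0 x l s"
    and newton: "newton_dir n m Q q A \<sigma> x l s dx dl ds"
    and \<gamma>: "0 < \<gamma>" "\<gamma> < 1" and \<sigma>: "0 < \<sigma>min" "\<sigma>min \<le> \<sigma>" "\<sigma> \<le> 1/2" and L: "L \<ge> 1"
    and product_bound: "\<forall>i\<le>n. \<bar>dx i * ds i\<bar> \<le> L * mu n x s"
    and sum_bound: "\<bar>\<Sum>i\<le>n. dx i * ds i\<bar> \<le> L * mu n x s"
  shows "step_ok n m Q q A \<gamma> \<beta> x0 l0 s0 x l s dx dl ds (\<sigma>min * (1 - \<gamma>) / (2 * L))"
proof -
  define a where "a = \<sigma>min * (1 - \<gamma>) / (2 * L)"
  let ?x = "\<lambda>\<alpha> i. x i + \<alpha> * dx i" and ?s = "\<lambda>\<alpha> i. s i + \<alpha> * ds i"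
  have pos: "\<forall>i\<le>n. x i > 0 \<and> s i > 0" and central: "\<forall>i\<le>n. \<gamma> * mu n x s \<le> x i * s i"
    and ratio: "res_norm n m Q q A x l s / mu n x s \<le> \<beta> * res_norm n m Q q A x0 l0 s0 / mu n x0 s0"
    using nbhd unfolding in_nbhd_def by auto
  have a_pos: "0 < a" unfolding a_def using \<sigma> \<gamma> L by simp
  have a_le: "a \<le> 1/4"
    using damped_step_size(3)[OF \<gamma> \<sigma> L, of a] a_pos unfolding a_def by simp
  note step = damped_newton_step_bounds[OF pos central newton \<gamma> \<sigma> L product_bound sum_bound,
      folded a_def]
  have mu_new_pos: "0 < mu n (?x \<alpha>) (?s \<alpha>)" if "0 \<le> \<alpha>" "\<alpha> \<le> a" for \<alpha>
  proof -
    have "0 < (1 - \<alpha>) * mu n x s" using that a_le mu_pos[OF pos] by simp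
    then show ?thesis using step(2)[OF that] by linarith
  qed
  have "\<forall>i\<le>n. 0 < ?x a i \<and> 0 < ?s a i"
  proof (intro allI impI)
    fix i assume i: "i \<le> n"
    have "0 < ?x \<alpha> i * ?s \<alpha> i" if "0 \<le> \<alpha>" "\<alpha> \<le> a" for \<alpha>
      using step(1)[OF that] mu_new_pos[OF that] \<gamma> i by (smt (verit) mult_pos_pos)
    moreover have "0 < x i" "0 < s i" using pos i by auto
    ultimately show "0 < ?x a i \<and> 0 < ?s a i"
      using pos_of_product_pos_on_segment[of "x i" "s i" a "dx i" "ds i"] a_pos by auto
  qed
  moreover have "res_norm n m Q q A (?x a) (\<lambda>k. l k + a * dl k) (?s a) / mu n (?x a) (?s a)
      \<le> \<beta> * res_norm n m Q q A x0 l0 s0 / mu n x0 s0"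
    using a_le a_pos step(2) mu_pos[OF pos] ratio
    by (intro in_nbhd_residual_ratio_newton_step[OF newton]) auto
  ultimately show ?thesis
    unfolding step_ok_def in_nbhd_def a_def[symmetric] using a_pos a_le step a_pos by auto
qed

text \<open>This is \<sigma>min(1 - \<gamma>)/(2L) for the bound L = 52\<beta>^2(n + 1)^2/\<gamma> on |\<Delta>x_i \<Delta>s_i|/\<mu>.\<close>
definition guaranteed_step :: "nat \<Rightarrow> real \<Rightarrow> real \<Rightarrow> real \<Rightarrow> real" where
  "guaranteed_step n \<beta> \<gamma> \<sigma>min = \<sigma>min * (1 - \<gamma>) * \<gamma> / (104 * \<beta>\<^sup>2 * (real (n + 1))\<^sup>2)"

definition rate_constant :: "real \<Rightarrow> real \<Rightarrow> real \<Rightarrow> real" where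
  "rate_constant \<beta> \<gamma> \<sigma>min = \<sigma>min * (1 - \<gamma>) * \<gamma> / (10400 * \<beta>\<^sup>2)"

lemma rate_constant_bounds:
  assumes "\<beta> \<ge> 1" "0 < \<gamma>" "\<gamma> < 1" "0 < \<sigma>min" "\<sigma>min \<le> 1"
  shows "0 < rate_constant \<beta> \<gamma> \<sigma>min" and "rate_constant \<beta> \<gamma> \<sigma>min \<le> 1"
proof -
  have \<beta>2: "1 \<le> \<beta>\<^sup>2" using assms by (simp add: one_le_power)
  then show "0 < rate_constant \<beta> \<gamma> \<sigma>min" unfolding rate_constant_def using assms by simp
  have "\<sigma>min * (1 - \<gamma>) * \<gamma> \<le> 1 * 1 * 1" using assms by (intro mult_mono) auto
  also have "\<dots> \<le> 10400 * \<beta>\<^sup>2" using \<beta>2 by simp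
  finally show "rate_constant \<beta> \<gamma> \<sigma>min \<le> 1" unfolding rate_constant_def using \<beta>2 by (simp add: divide_le_eq)
qed

lemma guaranteed_step_rate:
  "0.01 * guaranteed_step n \<beta> \<gamma> \<sigma>min = rate_constant \<beta> \<gamma> \<sigma>min / (real (n + 1))\<^sup>2"
  unfolding guaranteed_step_def rate_constant_def by simp

lemma step_ok_guaranteed_step:
  assumes sa: "standing_assms n m Q A" and opt: "optimal_pd n m Q q A xs ls ss"
    and xs_le: "\<forall>i\<le>n. xs i \<le> \<zeta>" and ss_le: "\<forall>i\<le>n. ss i \<le> \<zeta>"
    and \<gamma>: "0 < \<gamma>" "\<gamma> < 1" and \<beta>: "\<beta> \<ge> 1"
    and \<sigma>: "0 < \<sigma>min" "\<sigma>min \<le> \<sigma>" "\<sigma> \<le> 1/2"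
    and nbhd: "in_nbhd n m Q q A \<gamma> \<beta> x0 l0 s0 x l s"
    and \<nu>: "0 \<le> \<nu>" "\<nu> \<le> 1"
    and rd_scaled: "\<forall>i\<le>n. rd n m Q q A x l s i = \<nu> * rd n m Q q A (\<lambda>i. \<zeta>) (\<lambda>j. 0) (\<lambda>i. \<zeta>) i"
    and rp_scaled: "\<forall>k<m. rp n A x k = \<nu> * rp n A (\<lambda>i. \<zeta>) k"
    and \<nu>_le: "\<nu> * \<zeta>\<^sup>2 \<le> \<beta> * mu n x s"
    and newton: "newton_dir n m Q q A \<sigma> x l s dx dl ds"
  shows "step_ok n m Q q A \<gamma> \<beta> x0 l0 s0 x l s dx dl ds (guaranteed_step n \<beta> \<gamma> \<sigma>min)"
proof -
  define L where "L = 52 * \<beta>\<^sup>2 * (real (n + 1))\<^sup>2 / \<gamma>"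
  define scaled where "scaled = (\<lambda>i. s i / x i * (dx i)\<^sup>2 + x i / s i * (ds i)\<^sup>2)"
  have pos: "\<forall>i\<le>n. x i > 0 \<and> s i > 0" and central: "\<forall>i\<le>n. x i * s i \<ge> \<gamma> * mu n x s"
    using nbhd unfolding in_nbhd_def by auto
  have "\<nu> * \<zeta> * (\<Sum>i\<le>n. x i + s i) \<le> 4 * \<beta> * real (n + 1) * mu n x s"
    by (rule infeasibility_l1_bound[OF sa opt xs_le ss_le pos \<nu> rd_scaled rp_scaled \<nu>_le \<beta>])
  then have "(\<Sum>i\<le>n. scaled i) \<le> 104 * \<beta>\<^sup>2 * (real (n + 1))\<^sup>2 * mu n x s / \<gamma>"
    unfolding scaled_def using \<gamma> \<sigma>
    by (intro scaled_newton_direction_bound[OF sa opt xs_le ss_le pos central _ _ \<nu> rd_scaled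
          rp_scaled newton _ _ _ \<beta>]) auto
  then have half_sum: "(\<Sum>i\<le>n. scaled i) / 2 \<le> L * mu n x s" unfolding L_def by simp
  have scaled_nonneg: "\<forall>i\<le>n. 0 \<le> scaled i" unfolding scaled_def using pos by auto
  have product_le: "\<forall>i\<le>n. \<bar>dx i * ds i\<bar> \<le> scaled i / 2"
    unfolding scaled_def using pos abs_mult_le_scaled_squares by auto
  have "\<forall>i\<le>n. \<bar>dx i * ds i\<bar> \<le> L * mu n x s"
  proof (intro allI impI)
    fix i assume "i \<le> n"
    then have "scaled i \<le> (\<Sum>i\<le>n. scaled i)" using scaled_nonneg by (intro member_le_sum) auto
    then show "\<bar>dx i * ds i\<bar> \<le> L * mu n x s" using product_le \<open>i \<le> n\<close> half_sum by fastforce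
  qed
  moreover have "\<bar>\<Sum>i\<le>n. dx i * ds i\<bar> \<le> L * mu n x s"
  proof -
    have "\<bar>\<Sum>i\<le>n. dx i * ds i\<bar> \<le> (\<Sum>i\<le>n. scaled i / 2)"
      using product_le by (intro order_trans[OF sum_abs sum_mono]) auto
    then show ?thesis using half_sum by (simp add: sum_divide_distrib)
  qed
  moreover have "L \<ge> 1"
  proof -
    have "1 * 1 \<le> \<beta>\<^sup>2 * (real (n + 1))\<^sup>2" using \<beta> by (intro mult_mono) (auto simp: one_le_power)
    then have "1 \<le> 52 * \<beta>\<^sup>2 * (real (n + 1))\<^sup>2 * 1" by simp
    also have "\<dots> \<le> 52 * \<beta>\<^sup>2 * (real (n + 1))\<^sup>2 / \<gamma>"
      using \<gamma> by (simp add: le_divide_eq mult_left_le)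
    finally show ?thesis unfolding L_def .
  qed
  moreover have "guaranteed_step n \<beta> \<gamma> \<sigma>min = \<sigma>min * (1 - \<gamma>) / (2 * L)"
    unfolding guaranteed_step_def L_def using \<gamma> by (simp add: field_simps)
  ultimately show ?thesis using step_ok_of_product_bounds[OF nbhd newton \<gamma> \<sigma>] by simp
qed

section \<open>The iterates of IIPM\<close>

lemma in_nbhd_start:
  assumes "0 < \<zeta>" "\<gamma> \<le> 1" "\<beta> \<ge> 1"
  shows "in_nbhd n m Q q A \<gamma> \<beta> (\<lambda>i. \<zeta>) (\<lambda>j. 0) (\<lambda>i. \<zeta>) (\<lambda>i. \<zeta>) (\<lambda>j. 0) (\<lambda>i. \<zeta>)"
proof -
  have "mu n (\<lambda>i. \<zeta>) (\<lambda>i. \<zeta>) = \<zeta> * \<zeta>" unfolding mu_def by simp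
  moreover have "0 \<le> res_norm n m Q q A (\<lambda>i. \<zeta>) (\<lambda>j. 0) (\<lambda>i. \<zeta>)"
    unfolding res_norm_def by (simp add: sum_nonneg)
  ultimately show ?thesis unfolding in_nbhd_def using assms
    by (auto simp: divide_right_mono mult_le_cancel_right1 intro: mult_right_le_one_le)
qed

locale iipm_trajectory =
  fixes n m :: nat and Q :: "nat \<Rightarrow> nat \<Rightarrow> real" and q :: "nat \<Rightarrow> real"
    and A :: "nat \<Rightarrow> nat \<Rightarrow> real"
    and \<beta> \<gamma> \<sigma>min \<sigma>max :: real and x l s :: "nat \<Rightarrow> nat \<Rightarrow> real"
    and \<sigma> \<alpha> :: "nat \<Rightarrow> real" and dx dl ds :: "nat \<Rightarrow> nat \<Rightarrow> real"
  assumes centering_bounds: "\<sigma>min \<le> \<sigma> k" "\<sigma> k \<le> \<sigma>max"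
    and newton: "newton_dir n m Q q A (\<sigma> k) (x k) (l k) (s k) (dx k) (dl k) (ds k)"
    and step_ok: "step_ok n m Q q A \<gamma> \<beta> (x 0) (l 0) (s 0) (x k) (l k) (s k) (dx k) (dl k) (ds k) (\<alpha> k)"
    and step_maximal: "step_ok n m Q q A \<gamma> \<beta> (x 0) (l 0) (s 0) (x k) (l k) (s k) (dx k) (dl k) (ds k) a
      \<Longrightarrow> a \<le> \<alpha> k"
    and x_Suc: "x (Suc k) = (\<lambda>i. x k i + \<alpha> k * dx k i)"
    and l_Suc: "l (Suc k) = (\<lambda>j. l k j + \<alpha> k * dl k j)"
    and s_Suc: "s (Suc k) = (\<lambda>i. s k i + \<alpha> k * ds k i)"

lemma iipm_run_trajectory:
  assumes "iipm_run n m Q q A \<beta> \<gamma> \<sigma>min \<sigma>max x l s"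
  obtains \<sigma> \<alpha> dx dl ds where "iipm_trajectory n m Q q A \<beta> \<gamma> \<sigma>min \<sigma>max x l s \<sigma> \<alpha> dx dl ds"
  using assms unfolding iipm_run_def iipm_trajectory_def by blast

context iipm_trajectory
begin

lemma step_length_bounds: "0 < \<alpha> k" "\<alpha> k \<le> 1"
  using step_ok[of k] unfolding step_ok_def by auto

definition residual_factor :: "nat \<Rightarrow> real" where
  "residual_factor k = (\<Prod>j<k. 1 - \<alpha> j)"

lemma residual_factor_bounds: "0 \<le> residual_factor k" "residual_factor k \<le> 1"
  unfolding residual_factor_def using step_length_bounds
  by (auto intro!: prod_nonneg prod_le_1 simp: less_imp_le)

lemma residuals_scale:
  "(\<forall>i\<le>n. rd n m Q q A (x k) (l k) (s k) i = residual_factor k * rd n m Q q A (x 0) (l 0) (s 0) i)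
   \<and> (\<forall>j<m. rp n A (x k) j = residual_factor k * rp n A (x 0) j)"
proof (induction k)
  case 0
  then show ?case unfolding residual_factor_def by simp
next
  case (Suc k)
  have "residual_factor (Suc k) = (1 - \<alpha> k) * residual_factor k"
    unfolding residual_factor_def by simp
  then show ?case unfolding x_Suc l_Suc s_Suc
    using rd_newton_step[OF newton] rp_newton_step[OF newton] Suc by simp
qed

lemma res_norm_scale:
  "res_norm n m Q q A (x k) (l k) (s k) = residual_factor k * res_norm n m Q q A (x 0) (l 0) (s 0)"
  using residuals_scale[of k] residual_factor_bounds[of k]
  by (simp add: res_norm_def power_mult_distrib sum_distrib_left[symmetric]
      distrib_left[symmetric] real_sqrt_mult)

lemma in_nbhd_iterate:
  assumes "in_nbhd n m Q q A \<gamma> \<beta> (x 0) (l 0) (s 0) (x 0) (l 0) (s 0)"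
  shows "in_nbhd n m Q q A \<gamma> \<beta> (x 0) (l 0) (s 0) (x k) (l k) (s k)"
proof (cases k)
  case (Suc j)
  then show ?thesis using step_ok[of j] unfolding Suc x_Suc l_Suc s_Suc step_ok_def by simp
qed (use assms in simp)

lemma mu_Suc_le: "mu n (x (Suc k)) (s (Suc k)) \<le> (1 - 0.01 * \<alpha> k) * mu n (x k) (s k)"
  using step_ok[of k] unfolding x_Suc s_Suc step_ok_def by (elim conjE)

text \<open>If the initial residual vanishes, \<nu> = 0 serves; otherwise the neighbourhood condition,
  divided by the initial residual norm, bounds the residual factor itself.\<close>
lemma infeasibility_factor:
  assumes nbhd: "in_nbhd n m Q q A \<gamma> \<beta> (x 0) (l 0) (s 0) (x k) (l k) (s k)"
    and \<beta>: "\<beta> \<ge> 1" and \<mu>0: "0 < mu n (x 0) (s 0)"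
  obtains \<nu> where "0 \<le> \<nu>" "\<nu> \<le> 1"
    "\<forall>i\<le>n. rd n m Q q A (x k) (l k) (s k) i = \<nu> * rd n m Q q A (x 0) (l 0) (s 0) i"
    "\<forall>j<m. rp n A (x k) j = \<nu> * rp n A (x 0) j"
    "\<nu> * mu n (x 0) (s 0) \<le> \<beta> * mu n (x k) (s k)"
proof -
  define R0 where "R0 = res_norm n m Q q A (x 0) (l 0) (s 0)"
  have R0: "R0 \<ge> 0" unfolding R0_def res_norm_def by (simp add: sum_nonneg)
  have \<mu>: "0 < mu n (x k) (s k)" using nbhd mu_pos unfolding in_nbhd_def by blast
  show thesis
  proof (cases "R0 = 0")
    case True
    then have "(\<Sum>i\<le>n. (rd n m Q q A (x 0) (l 0) (s 0) i)\<^sup>2) = 0" "(\<Sum>j<m. (rp n A (x 0) j)\<^sup>2) = 0"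
      unfolding R0_def res_norm_def by (simp_all add: add_nonneg_eq_0_iff sum_nonneg)
    then have "\<forall>i\<le>n. rd n m Q q A (x 0) (l 0) (s 0) i = 0" "\<forall>j<m. rp n A (x 0) j = 0"
      by (simp_all add: sum_nonneg_eq_0_iff)
    with residuals_scale[of k] \<beta> \<mu> show thesis by (intro that[of 0]) auto
  next
    case False
    then have R0_pos: "R0 > 0" using R0 by simp
    have "residual_factor k * R0 / mu n (x k) (s k) \<le> \<beta> * R0 / mu n (x 0) (s 0)"
      using nbhd unfolding in_nbhd_def res_norm_scale[of k] R0_def by (elim conjE)
    then have "R0 * (residual_factor k * mu n (x 0) (s 0)) \<le> R0 * (\<beta> * mu n (x k) (s k))"
      using \<mu> \<mu>0 by (simp add: field_simps)
    then have "residual_factor k * mu n (x 0) (s 0) \<le> \<beta> * mu n (x k) (s k)"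
      using R0_pos by simp
    with residuals_scale[of k] residual_factor_bounds[of k] show thesis by (intro that) auto
  qed
qed

lemma mu_geometric_decay:
  assumes sa: "standing_assms n m Q A" and opt: "optimal_pd n m Q q A xs ls ss"
    and \<zeta>: "\<zeta> > 0" and opt_norm: "sqrt ((\<Sum>i\<le>n. (xs i)\<^sup>2) + (\<Sum>i\<le>n. (ss i)\<^sup>2)) \<le> \<zeta>"
    and x0: "x 0 = (\<lambda>i. \<zeta>)" and l0: "l 0 = (\<lambda>j. 0)" and s0: "s 0 = (\<lambda>i. \<zeta>)"
    and \<gamma>: "0 < \<gamma>" "\<gamma> < 1" and \<beta>: "\<beta> \<ge> 1" and \<sigma>: "0 < \<sigma>min" "\<sigma>max \<le> 1/2"
  shows "mu n (x k) (s k) \<le> (1 - rate_constant \<beta> \<gamma> \<sigma>min / (real (n + 1))\<^sup>2) ^ k * \<zeta>\<^sup>2"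
proof -
  define g where "g = guaranteed_step n \<beta> \<gamma> \<sigma>min"
  have xs_le: "\<forall>i\<le>n. xs i \<le> \<zeta>" and ss_le: "\<forall>i\<le>n. ss i \<le> \<zeta>"
    using components_le_of_norm_le[OF opt_norm] by auto
  have \<mu>0: "mu n (x 0) (s 0) = \<zeta>\<^sup>2" unfolding x0 s0 mu_def by (simp add: power2_eq_square)
  have "in_nbhd n m Q q A \<gamma> \<beta> (x 0) (l 0) (s 0) (x 0) (l 0) (s 0)"
    using in_nbhd_start[OF \<zeta>] \<gamma> \<beta> unfolding x0 l0 s0 by simp
  then have nbhd: "in_nbhd n m Q q A \<gamma> \<beta> (x 0) (l 0) (s 0) (x k) (l k) (s k)" for k
    by (rule in_nbhd_iterate)
  have decrease: "mu n (x (Suc k)) (s (Suc k)) \<le> (1 - 0.01 * g) * mu n (x k) (s k) \<and> g \<le> 1" for k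
  proof -
    obtain \<nu> where \<nu>: "0 \<le> \<nu>" "\<nu> \<le> 1"
      "\<forall>i\<le>n. rd n m Q q A (x k) (l k) (s k) i = \<nu> * rd n m Q q A (\<lambda>i. \<zeta>) (\<lambda>j. 0) (\<lambda>i. \<zeta>) i"
      "\<forall>j<m. rp n A (x k) j = \<nu> * rp n A (\<lambda>i. \<zeta>) j" "\<nu> * \<zeta>\<^sup>2 \<le> \<beta> * mu n (x k) (s k)"
      using infeasibility_factor[OF nbhd \<beta>] \<mu>0 \<zeta> unfolding x0 l0 s0 by auto
    have "\<sigma>min \<le> \<sigma> k" "\<sigma> k \<le> 1/2" using centering_bounds[of k] \<sigma> by auto
    then have "g \<le> \<alpha> k" unfolding g_def
      by (intro step_maximal step_ok_guaranteed_step[OF sa opt xs_le ss_le \<gamma> \<beta> \<sigma>(1) _ _ nbhd \<nu>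
            newton])
    moreover have "0 < mu n (x k) (s k)" using nbhd[of k] mu_pos unfolding in_nbhd_def by blast
    ultimately have "(1 - 0.01 * \<alpha> k) * mu n (x k) (s k) \<le> (1 - 0.01 * g) * mu n (x k) (s k)"
      by (intro mult_right_mono) auto
    with mu_Suc_le[of k] \<open>g \<le> \<alpha> k\<close> step_length_bounds[of k] show ?thesis by simp
  qed
  have "mu n (x k) (s k) \<le> (1 - 0.01 * g) ^ k * \<zeta>\<^sup>2"
  proof (induction k)
    case 0
    then show ?case using \<mu>0 by simp
  next
    case (Suc k)
    have "0 \<le> 1 - 0.01 * g" using decrease[of 0] by auto
    with Suc have "(1 - 0.01 * g) * mu n (x k) (s k) \<le> (1 - 0.01 * g) * ((1 - 0.01 * g) ^ k * \<zeta>\<^sup>2)"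
      by (rule mult_left_mono)
    with decrease[of k] have "mu n (x (Suc k)) (s (Suc k)) \<le> (1 - 0.01 * g) * ((1 - 0.01 * g) ^ k * \<zeta>\<^sup>2)"
      by linarith
    then show ?case by (simp add: mult.assoc)
  qed
  then show ?thesis unfolding g_def guaranteed_step_rate .
qed

end

section \<open>Iteration count\<close>

lemma geometric_decay_le:
  fixes \<delta> \<zeta> \<epsilon> :: real
  assumes \<delta>: "0 < \<delta>" "\<delta> \<le> 1" and \<epsilon>: "0 < \<epsilon>" and \<zeta>: "0 < \<zeta>"
    and k: "ln (\<zeta>\<^sup>2 / \<epsilon>) \<le> \<delta> * real k"
  shows "(1 - \<delta>) ^ k * \<zeta>\<^sup>2 \<le> \<epsilon>"
proof -
  have "(1 - \<delta>) ^ k \<le> exp (- \<delta>) ^ k"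
    using \<delta> exp_ge_add_one_self[of "- \<delta>"] by (intro power_mono) auto
  also have "\<dots> = exp (- (\<delta> * real k))" by (simp add: exp_of_nat_mult[symmetric] mult.commute)
  also have "\<dots> \<le> exp (- ln (\<zeta>\<^sup>2 / \<epsilon>))" using k by simp
  also have "\<dots> = \<epsilon> / \<zeta>\<^sup>2" using \<epsilon> \<zeta> by (simp add: exp_minus)
  finally show ?thesis using \<zeta> by (simp add: le_divide_eq)
qed

lemma ln_ratio_le_of_powr_bound:
  fixes \<chi> \<kappa> \<epsilon> \<zeta> :: real
  assumes "0 < \<chi>" "0 < \<kappa>" "0 < \<epsilon>" "0 < \<zeta>" "\<zeta>\<^sup>2 \<le> \<chi> / \<epsilon> powr \<kappa>"
  shows "ln (\<zeta>\<^sup>2 / \<epsilon>) \<le> \<bar>ln \<chi>\<bar> + (1 + \<kappa>) * \<bar>ln \<epsilon>\<bar>"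
proof -
  have "ln (\<zeta>\<^sup>2) \<le> ln (\<chi> / \<epsilon> powr \<kappa>)" using assms by simp
  also have "\<dots> = ln \<chi> - \<kappa> * ln \<epsilon>" using assms by (simp add: ln_div ln_powr)
  finally have "ln (\<zeta>\<^sup>2 / \<epsilon>) \<le> ln \<chi> + \<kappa> * (- ln \<epsilon>) + (- ln \<epsilon>)"
    using assms by (simp add: ln_div)
  moreover have "\<kappa> * (- ln \<epsilon>) \<le> \<kappa> * \<bar>ln \<epsilon>\<bar>" using assms by (intro mult_left_mono) auto
  ultimately show ?thesis by (simp add: algebra_simps)
qed

text \<open>The iteration count \<lceil>ln(\<zeta>^2/\<epsilon>) N^2 / c\<rceil> is O(N^2 |ln \<epsilon>|) because \<zeta>^2 grows at most
  polynomially in 1/\<epsilon>.\<close>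
lemma iteration_count_bound:
  fixes c \<chi> \<kappa> \<epsilon> \<zeta> N :: real
  assumes c: "0 < c" "c \<le> 1" and \<chi>: "0 < \<chi>" and \<kappa>: "0 < \<kappa>" and \<epsilon>: "0 < \<epsilon>" and \<zeta>: "0 < \<zeta>"
    and \<zeta>_bound: "\<zeta>\<^sup>2 \<le> \<chi> / \<epsilon> powr \<kappa>" and N: "N \<ge> 1"
  shows "\<exists>K::nat. real K \<le> (1 + (\<bar>ln \<chi>\<bar> + 1 + \<kappa>) / c) * N\<^sup>2 * (1 + \<bar>ln \<epsilon>\<bar>) \<and>
           (\<forall>k\<ge>K. (1 - c / N\<^sup>2) ^ k * \<zeta>\<^sup>2 \<le> \<epsilon>)"
proof -
  define \<delta> where "\<delta> = c / N\<^sup>2"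
  define \<Lambda> where "\<Lambda> = ln (\<zeta>\<^sup>2 / \<epsilon>)"
  define K where "K = nat \<lceil>\<Lambda> / \<delta>\<rceil>"
  have N2: "N\<^sup>2 \<ge> 1" using N by (simp add: one_le_power)
  have N2_pos: "0 < N\<^sup>2" using N2 by linarith
  then have \<delta>: "0 < \<delta>" "\<delta> \<le> 1" unfolding \<delta>_def using c N2 by (simp_all add: divide_le_eq)
  have "\<forall>k\<ge>K. (1 - \<delta>) ^ k * \<zeta>\<^sup>2 \<le> \<epsilon>"
  proof (intro allI impI geometric_decay_le[OF \<delta> \<epsilon> \<zeta>])
    fix k assume "K \<le> k"
    then have "\<Lambda> / \<delta> \<le> real k" unfolding K_def by linarith
    then show "ln (\<zeta>\<^sup>2 / \<epsilon>) \<le> \<delta> * real k" unfolding \<Lambda>_def using \<delta> by (simp add: divide_le_eq mult.commute)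
  qed
  moreover have "real K \<le> (1 + (\<bar>ln \<chi>\<bar> + 1 + \<kappa>) / c) * N\<^sup>2 * (1 + \<bar>ln \<epsilon>\<bar>)"
  proof -
    define a e where "a = \<bar>ln \<chi>\<bar>" and "e = \<bar>ln \<epsilon>\<bar>"
    have ae: "0 \<le> a" "0 \<le> e" unfolding a_def e_def by simp_all
    have "\<Lambda> \<le> a + (1 + \<kappa>) * e"
      unfolding \<Lambda>_def a_def e_def by (rule ln_ratio_le_of_powr_bound[OF \<chi> \<kappa> \<epsilon> \<zeta> \<zeta>_bound])
    also have "\<dots> \<le> (a + 1 + \<kappa>) * (1 + e)" using ae \<kappa> by (simp add: algebra_simps)
    finally have "\<Lambda> * N\<^sup>2 / c \<le> (a + 1 + \<kappa>) * (1 + e) * N\<^sup>2 / c"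
      using c N2_pos by (intro divide_right_mono mult_right_mono) auto
    moreover have "\<Lambda> / \<delta> = \<Lambda> * N\<^sup>2 / c" unfolding \<delta>_def using c N2_pos by simp
    moreover have "0 \<le> (a + 1 + \<kappa>) * (1 + e) * N\<^sup>2 / c" using ae \<kappa> c by simp
    ultimately have "real K \<le> 1 + (a + 1 + \<kappa>) * (1 + e) * N\<^sup>2 / c" unfolding K_def by linarith
    also have "\<dots> \<le> N\<^sup>2 * (1 + e) + (a + 1 + \<kappa>) * (1 + e) * N\<^sup>2 / c"
      using mult_mono[OF N2, of 1 "1 + e"] ae by simp
    also have "\<dots> = (1 + (a + 1 + \<kappa>) / c) * N\<^sup>2 * (1 + e)" by (simp add: algebra_simps)
    finally show ?thesis unfolding a_def e_def .
  qed
  ultimately show ?thesis unfolding \<delta>_def by blast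
qed

theorem theorem3:
  fixes \<chi> \<kappa> \<beta> \<gamma> \<sigma>min \<sigma>max :: real
  assumes "\<chi> > 0" and "\<kappa> > 0" and "\<beta> \<ge> 1" and "0 < \<gamma>" and "\<gamma> < 1"
    and "0 < \<sigma>min" and "\<sigma>min < \<sigma>max" and "\<sigma>max \<le> 1/2"
  shows "\<exists>C::real. \<forall>(n::nat) (m::nat) Q q A xs ls ss (\<epsilon>::real) (\<zeta>::real) x l s.
     standing_assms n m Q A \<and>
     optimal_pd n m Q q A xs ls ss \<and>
     \<epsilon> > 0 \<and> \<zeta> > 0 \<and>
     sqrt ((\<Sum>i\<le>n. (xs i)\<^sup>2) + (\<Sum>i\<le>n. (ss i)\<^sup>2)) \<le> \<zeta> \<and>
     \<zeta>\<^sup>2 \<le> \<chi> / \<epsilon> powr \<kappa> \<and>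
     x 0 = (\<lambda>i. \<zeta>) \<and> l 0 = (\<lambda>j. 0) \<and> s 0 = (\<lambda>i. \<zeta>) \<and>
     iipm_run n m Q q A \<beta> \<gamma> \<sigma>min \<sigma>max x l s
     \<longrightarrow> (\<exists>K::nat. real K \<le> C * real ((n + 1)\<^sup>2) * (1 + \<bar>ln \<epsilon>\<bar>) \<and>
              (\<forall>k\<ge>K. mu n (x k) (s k) \<le> \<epsilon>))"
proof (intro exI[of _ "1 + (\<bar>ln \<chi>\<bar> + 1 + \<kappa>) / rate_constant \<beta> \<gamma> \<sigma>min"] allI impI, elim conjE)
  fix n m Q q A xs ls ss \<epsilon> \<zeta> x l s
  assume sa: "standing_assms n m Q A" and opt: "optimal_pd n m Q q A xs ls ss"
    and \<epsilon>: "\<epsilon> > 0" and \<zeta>: "\<zeta> > 0"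
    and opt_norm: "sqrt ((\<Sum>i\<le>n. (xs i)\<^sup>2) + (\<Sum>i\<le>n. (ss i)\<^sup>2)) \<le> \<zeta>"
    and \<zeta>_bound: "\<zeta>\<^sup>2 \<le> \<chi> / \<epsilon> powr \<kappa>"
    and x0: "x 0 = (\<lambda>i. \<zeta>)" and l0: "l 0 = (\<lambda>j. 0)" and s0: "s 0 = (\<lambda>i. \<zeta>)"
    and run: "iipm_run n m Q q A \<beta> \<gamma> \<sigma>min \<sigma>max x l s"
  let ?c = "rate_constant \<beta> \<gamma> \<sigma>min"
  have c: "0 < ?c" "?c \<le> 1" using rate_constant_bounds assms by auto
  obtain \<sigma> \<alpha> dx dl ds where traj: "iipm_trajectory n m Q q A \<beta> \<gamma> \<sigma>min \<sigma>max x l s \<sigma> \<alpha> dx dl ds"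
    using iipm_run_trajectory[OF run] .
  have decay: "mu n (x k) (s k) \<le> (1 - ?c / (real (n + 1))\<^sup>2) ^ k * \<zeta>\<^sup>2" for k
    using iipm_trajectory.mu_geometric_decay[OF traj sa opt \<zeta> opt_norm x0 l0 s0 assms(4,5,3,6,8)] .
  obtain K :: nat
    where "real K \<le> (1 + (\<bar>ln \<chi>\<bar> + 1 + \<kappa>) / ?c) * (real (n + 1))\<^sup>2 * (1 + \<bar>ln \<epsilon>\<bar>)"
      and "\<forall>k\<ge>K. (1 - ?c / (real (n + 1))\<^sup>2) ^ k * \<zeta>\<^sup>2 \<le> \<epsilon>"
    using iteration_count_bound[OF c assms(1,2) \<epsilon> \<zeta> \<zeta>_bound, of "real (n + 1)"] by auto
  with decay show "\<exists>K::nat. real K \<le> (1 + (\<bar>ln \<chi>\<bar> + 1 + \<kappa>) / ?c) * real ((n + 1)\<^sup>2) * (1 + \<bar>ln \<epsilon>\<bar>)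
      \<and> (\<forall>k\<ge>K. mu n (x k) (s k) \<le> \<epsilon>)"
    using order_trans unfolding of_nat_power by blast
qed

end
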